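(* Let $K(t,x,z)=\sum_{S} t^{\mathrm{da}(S)}x^{m(S)}z^{|S|}$, where the sum runs over all compositions $S$ (of all nonnegative integers $n$, including the empty composition of $0$), $m(S)$ is the number of parts of $S$ and $|S|$ is the sum of its parts. Then, as formal power series, $$K(t,x,z)=\frac{(1-z+xz)(1-z^2)}{(1-z)(1-(1+x^2)z^2)-2tx^2z^3}.$$
   Context: A composition of $n$ with $m$ parts is a sequence $(a_1,\dots,a_m)$ of positive integers with $m\ge 0$ and $a_1+\dots+a_m=n$. For a finite sequence $S=(a_1,\dots,a_m)$, the degree of asymmetry is $\mathrm{da}(S)=|\{i: 1\le i\le m/2,\ a_i\neq a_{m+1-i}\}|$. *)

theory Defs
  imports "HOL-Computational_Algebra.Polynomial" "HOL-Computational_Algebra.Formal_Power_Series"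
begin

definition compositions :: "nat \<Rightarrow> nat list set" where
  "compositions n = {S. (\<forall>a\<in>set S. 0 < a) \<and> sum_list S = n}"

(* degree of asymmetry, 1-indexed: a_i = S ! (i-1), a_{m+1-i} = S ! (m-i) *)
definition da :: "nat list \<Rightarrow> nat" where
  "da S = card {i. 1 \<le> i \<and> 2 * i \<le> length S \<and> S ! (i - 1) \<noteq> S ! (length S - i)}"

(* Formal power series in z whose coefficients are polynomials in x (outer poly)
   with coefficients polynomials in t (inner poly), over the integers. *)
type_synonym tx_poly = "int poly poly"

definition var_t :: tx_poly where "var_t = [:[:0, 1:]:]"
definition var_x :: tx_poly where "var_x = [:0, 1:]"

definition K :: "tx_poly fps" where
  "K = Abs_fps (\<lambda>n. \<Sum>S\<in>compositions n. var_t ^ da S * var_x ^ length S)"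

end

theory Submission
  imports Defs
begin

(* A composition with at least two parts is uniquely a # M @ [b] with M a composition,
   and da (a # M @ [b]) = da M + [a \<noteq> b]. Hence K = 1 + x P + x^2 Q K, where
   P = z/(1 - z) counts the one-part compositions and
   Q = \<Sum>_{a,b \<ge> 1} t^[a \<noteq> b] z^(a+b) = t P^2 + (1 - t) z^2/(1 - z^2)
   counts the outer pairs (a, b). Multiplying by (1 - z)^2 (1 + z) clears all denominators. *)

lemma length_le_sum_list_pos: "\<forall>a\<in>set S. 0 < a \<Longrightarrow> length S \<le> sum_list (S :: nat list)"
  by (induction S) auto

lemma finite_compositions: "finite (compositions n)"
proof -
  have "compositions n \<subseteq> {S. set S \<subseteq> {..n} \<and> length S \<le> n}"
    using member_le_sum_list length_le_sum_list_pos by (fastforce simp: compositions_def)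
  then show ?thesis
    using finite_lists_length_le[of "{..n}" n] finite_subset by blast
qed

lemma compositions_length_less_2:
  "{S \<in> compositions n. length S < 2} = (if n = 0 then {[]} else {[n]})"
proof (intro set_eqI iffI)
  fix S assume "S \<in> {S \<in> compositions n. length S < 2}"
  then have "S = [] \<or> (\<exists>a. S = [a])" "S \<in> compositions n"
    by (auto simp: length_Suc_conv numeral_2_eq_2 less_Suc_eq)
  then show "S \<in> (if n = 0 then {[]} else {[n]})"
    by (auto simp: compositions_def)
qed (auto simp: compositions_def split: if_splits)

definition wrap :: "nat \<times> nat \<times> nat list \<Rightarrow> nat list" where
  "wrap = (\<lambda>(i, j, M). j # M @ [i - j])"

lemma bij_betw_wrap:
  "bij_betw wrap (SIGMA i:{..n}. SIGMA j:{1..<i}. compositions (n - i))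
     {S \<in> compositions n. 2 \<le> length S}"
proof (rule bij_betw_imageI)
  show "inj_on wrap (SIGMA i:{..n}. SIGMA j:{1..<i}. compositions (n - i))"
    by (rule inj_onI) (auto simp: wrap_def)
  show "wrap ` (SIGMA i:{..n}. SIGMA j:{1..<i}. compositions (n - i))
      = {S \<in> compositions n. 2 \<le> length S}"
  proof (intro equalityI subsetI)
    fix S assume "S \<in> wrap ` (SIGMA i:{..n}. SIGMA j:{1..<i}. compositions (n - i))"
    then obtain i j M
      where "S = j # M @ [i - j]" "i \<le> n" "j < i" "0 < j" "M \<in> compositions (n - i)"
      by (auto simp: wrap_def)
    then show "S \<in> {S \<in> compositions n. 2 \<le> length S}"
      by (auto simp: compositions_def)
  next
    fix S assume S: "S \<in> {S \<in> compositions n. 2 \<le> length S}"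
    then obtain a M b where S_eq: "S = a # M @ [b]"
      by (cases S rule: rev_cases) (auto simp: Suc_le_length_iff)
    with S have "(a + b, a, M) \<in> (SIGMA i:{..n}. SIGMA j:{1..<i}. compositions (n - i))"
      by (auto simp: compositions_def)
    moreover have "S = wrap (a + b, a, M)"
      by (simp add: S_eq wrap_def)
    ultimately show "S \<in> wrap ` (SIGMA i:{..n}. SIGMA j:{1..<i}. compositions (n - i))"
      by blast
  qed
qed

lemma da_length_less_2:
  assumes "length S < 2"
  shows "da S = 0"
proof -
  have no_pairs: "{i. 1 \<le> i \<and> 2 * i \<le> length S \<and> S ! (i - 1) \<noteq> S ! (length S - i)} = {}"
    using assms by auto
  show ?thesis
    unfolding da_def no_pairs by simp
qed

lemma da_Cons_snoc: "da (a # M @ [b]) = da M + (if a = b then 0 else 1)"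
proof -
  define A where "A S = {i. 1 \<le> i \<and> 2 * i \<le> length S \<and> S ! (i - 1) \<noteq> S ! (length S - i)}"
    for S :: "nat list"
  have da_A: "da S = card (A S)" for S
    by (simp add: da_def A_def)
  have "A (a # M @ [b]) = (if a = b then {} else {1}) \<union> Suc ` A M"
  proof (rule set_eqI)
    show "i \<in> A (a # M @ [b]) \<longleftrightarrow> i \<in> (if a = b then {} else {1}) \<union> Suc ` A M" for i
      by (cases i) (auto simp: A_def nth_append nth_Cons' image_iff split: nat.splits)
  qed
  moreover have "finite (A M)" and "0 \<notin> A M"
    by (rule finite_subset[of _ "{..length M}"]) (auto simp: A_def)
  ultimately show ?thesis
    by (simp add: da_A card_image card_insert_if image_iff)
qed

definition fps_pos :: "'a::comm_ring_1 fps" where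
  "fps_pos = Abs_fps (\<lambda>n. if n = 0 then 0 else 1)"

definition fps_even_pos :: "'a::comm_ring_1 fps" where
  "fps_even_pos = Abs_fps (\<lambda>n. if even n \<and> n \<noteq> 0 then 1 else 0)"

lemma fps_pos_times_one_minus_X: "fps_pos * (1 - fps_X) = fps_X"
  by (rule fps_ext) (simp add: algebra_simps fps_pos_def)

lemma fps_even_pos_times_one_minus_X2: "fps_even_pos * (1 - fps_X ^ 2) = fps_X ^ 2"
proof (rule fps_ext)
  fix n
  have "fps_nth (fps_even_pos * (1 - fps_X ^ 2)) n
      = fps_nth fps_even_pos n - (if n < 2 then 0 else fps_nth fps_even_pos (n - 2))"
    by (simp add: right_diff_distrib fps_X_power_mult_right_nth)
  also have "\<dots> = fps_nth (fps_X ^ 2) n"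
    by (cases "n < 2") (auto simp: fps_even_pos_def fps_X_power_nth)
  finally show "fps_nth (fps_even_pos * (1 - fps_X ^ 2)) n = fps_nth (fps_X ^ 2 :: 'a fps) n" .
qed

lemma fps_nth_fps_pos_squared: "fps_nth (fps_pos ^ 2) i = (\<Sum>j\<in>{1..<i}. 1)"
proof -
  have "fps_nth (fps_pos ^ 2) i
      = (\<Sum>j=0..i. (if j = 0 then 0 else 1) * (if i - j = 0 then 0 else 1))"
    by (simp add: power2_eq_square fps_mult_nth fps_pos_def)
  also have "\<dots> = (\<Sum>j\<in>{1..<i}. 1)"
    by (rule sum.mono_neutral_cong_right) auto
  finally show ?thesis .
qed

lemma fps_nth_fps_even_pos: "fps_nth fps_even_pos i = (\<Sum>j\<in>{1..<i}. if 2 * j = i then 1 else 0)"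
proof -
  have "(\<Sum>j\<in>{1..<i}. if 2 * j = i then 1 else 0)
      = (\<Sum>j\<in>{1..<i}. if j = i div 2 \<and> even i then 1 else (0::'a))"
    by (rule sum.cong) auto
  also have "\<dots> = fps_nth fps_even_pos i"
    by (auto simp: fps_even_pos_def)
  finally show ?thesis ..
qed

definition outer_pairs_gf :: "'a::comm_ring_1 \<Rightarrow> 'a fps" where
  "outer_pairs_gf t = Abs_fps (\<lambda>i. \<Sum>j\<in>{1..<i}. if 2 * j = i then 1 else t)"

lemma outer_pairs_gf_eq:
  "outer_pairs_gf t = fps_const t * fps_pos ^ 2 + fps_const (1 - t) * fps_even_pos"
proof (rule fps_ext)
  fix i
  have "fps_nth (outer_pairs_gf t) i
      = (\<Sum>j\<in>{1..<i}. t * 1 + (1 - t) * (if 2 * j = i then 1 else 0))"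
    unfolding outer_pairs_gf_def fps_nth_Abs_fps by (intro sum.cong refl) (simp add: algebra_simps)
  also have "\<dots> = fps_nth (fps_const t * fps_pos ^ 2 + fps_const (1 - t) * fps_even_pos) i"
    by (simp add: sum.distrib sum_distrib_left fps_nth_fps_pos_squared fps_nth_fps_even_pos)
  finally show "fps_nth (outer_pairs_gf t) i
      = fps_nth (fps_const t * fps_pos ^ 2 + fps_const (1 - t) * fps_even_pos) i" .
qed

lemma outer_pairs_gf_times:
  "outer_pairs_gf t * ((1 - fps_X) ^ 2 * (1 + fps_X))
     = fps_X ^ 2 * (1 - fps_X + 2 * fps_const t * fps_X)"
proof -
  have const_diff: "fps_const (1 - t) = 1 - fps_const t"
    by (metis fps_const_1_eq_1 fps_const_sub)
  have "outer_pairs_gf t * ((1 - fps_X) ^ 2 * (1 + fps_X))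
      = fps_const t * (fps_pos * (1 - fps_X)) ^ 2 * (1 + fps_X)
        + (1 - fps_const t) * (fps_even_pos * (1 - fps_X ^ 2)) * (1 - fps_X)"
    unfolding outer_pairs_gf_eq const_diff by (simp add: algebra_simps power2_eq_square)
  also have "\<dots> = fps_X ^ 2 * (1 - fps_X + 2 * fps_const t * fps_X)"
    unfolding fps_pos_times_one_minus_X fps_even_pos_times_one_minus_X2
    by (simp add: algebra_simps power2_eq_square)
  finally show ?thesis .
qed

lemma K_nth:
  "fps_nth K n = (if n = 0 then 1 else var_x)
     + var_x ^ 2 * (\<Sum>i\<le>n. fps_nth (outer_pairs_gf var_t) i * fps_nth K (n - i))"
proof -
  define f where "f S = var_t ^ da S * var_x ^ length S" for S
  have f_wrap: "f (wrap (i, j, M)) = var_x ^ 2 * ((if 2 * j = i then 1 else var_t) * f M)"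
    if "j < i" for i j M
  proof -
    from that have "j = i - j \<longleftrightarrow> 2 * j = i" by arith
    then show ?thesis
      by (simp add: f_def wrap_def da_Cons_snoc power_add power2_eq_square ac_simps)
  qed
  have split: "compositions n
      = {S \<in> compositions n. length S < 2} \<union> {S \<in> compositions n. 2 \<le> length S}"
    by auto
  have "fps_nth K n = sum f (compositions n)"
    by (simp add: K_def f_def)
  also have "\<dots> = sum f {S \<in> compositions n. length S < 2}
      + sum f {S \<in> compositions n. 2 \<le> length S}"
    by (subst split, rule sum.union_disjoint) (auto simp: finite_compositions)
  also have "sum f {S \<in> compositions n. length S < 2} = (if n = 0 then 1 else var_x)"
    by (simp add: compositions_length_less_2 f_def da_length_less_2)
  also have "sum f {S \<in> compositions n. 2 \<le> length S}
      = (\<Sum>p \<in> (SIGMA i:{..n}. SIGMA j:{1..<i}. compositions (n - i)). f (wrap p))"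
    by (rule sum.reindex_bij_betw[OF bij_betw_wrap, symmetric])
  also have "\<dots> = (\<Sum>i\<le>n. \<Sum>j\<in>{1..<i}. \<Sum>M\<in>compositions (n - i). f (wrap (i, j, M)))"
    by (simp add: sum.Sigma finite_compositions case_prod_beta')
  also have "\<dots> = (\<Sum>i\<le>n. \<Sum>j\<in>{1..<i}. \<Sum>M\<in>compositions (n - i).
      var_x ^ 2 * ((if 2 * j = i then 1 else var_t) * f M))"
    by (intro sum.cong refl) (simp add: f_wrap)
  also have "\<dots> = (\<Sum>i\<le>n. var_x ^ 2 * (fps_nth (outer_pairs_gf var_t) i * fps_nth K (n - i)))"
    by (intro sum.cong refl)
      (simp add: outer_pairs_gf_def K_def f_def sum_distrib_left sum_distrib_right, rule sum.swap)
  also have "\<dots> = var_x ^ 2 * (\<Sum>i\<le>n. fps_nth (outer_pairs_gf var_t) i * fps_nth K (n - i))"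
    by (simp add: sum_distrib_left)
  finally show ?thesis .
qed

lemma K_eq: "K = 1 + fps_const var_x * fps_pos + fps_const var_x ^ 2 * (outer_pairs_gf var_t * K)"
proof (rule fps_ext)
  fix n
  have "(\<Sum>i\<le>n. fps_nth (outer_pairs_gf var_t) i * fps_nth K (n - i))
      = fps_nth (outer_pairs_gf var_t * K) n"
    by (simp add: fps_mult_nth atLeast0AtMost)
  then show "fps_nth K n
      = fps_nth (1 + fps_const var_x * fps_pos + fps_const var_x ^ 2 * (outer_pairs_gf var_t * K)) n"
    by (subst K_nth) (simp add: fps_pos_def)
qed

theorem proposition2p1:
  shows "K * ((1 - fps_X) * (1 - (1 + fps_const var_x ^ 2) * fps_X ^ 2)
              - 2 * fps_const var_t * fps_const var_x ^ 2 * fps_X ^ 3)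
         = (1 - fps_X + fps_const var_x * fps_X) * (1 - fps_X ^ 2)"
proof -
  define z :: "tx_poly fps" where "z = fps_X"
  define x where "x = fps_const var_x"
  define D where "D = (1 - z) ^ 2 * (1 + z)"
  have outer_pairs_D: "outer_pairs_gf var_t * D = z ^ 2 * (1 - z + 2 * fps_const var_t * z)"
    unfolding D_def z_def by (rule outer_pairs_gf_times)
  have "K * ((1 - z) * (1 - (1 + x ^ 2) * z ^ 2) - 2 * fps_const var_t * x ^ 2 * z ^ 3)
      = K * D - x ^ 2 * K * (outer_pairs_gf var_t * D)"
    unfolding outer_pairs_D by (simp add: D_def algebra_simps power2_eq_square power3_eq_cube)
  also have "\<dots> = (1 + x * fps_pos) * D"
    by (subst (1) K_eq[folded x_def]) (simp add: algebra_simps)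
  also have "\<dots> = (1 - z + x * (fps_pos * (1 - z))) * (1 - z ^ 2)"
    by (simp add: D_def algebra_simps power2_eq_square)
  finally show ?thesis
    by (simp add: x_def z_def fps_pos_times_one_minus_X)
qed

end
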